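(* Let $n$ be a positive integer and $d\in\Delta(n)$, written as $d=(1,2,\dots,q,q^{(s_q)},(q-1)^{(s_{q-1})},\dots,1^{(s_1)})$ with $q\ge1$, $s_1,\dots,s_q\ge0$; let $L=q+\sum_{i=1}^q s_i$ be the index of the last nonzero entry $d_L$, and set $b_i=d_i-d_{i+1}$ for $q\le i<L$ and $b_L=d_L$. Then: (1) If $s_i\ge2$ for all $1\le i<q$, then $|\,[\,d\,]_q\,|=1$. (2) If $s_i\ge2$ for all $1\le i<q$ and $s_q\ge1$, then $|\,[\,d\,]\,|=\prod_{i=q}^{L}(b_i+1)$. (3) For every natural number $m$ there exist a positive integer $n'$ and a partition $\alpha\in\mathcal{P}(n')$ such that, with $d'=\delta(\alpha)$, $|\,[\,d'\,]\,|=m$. (4) If $d=(1,2,\dots,q,k^{(s_k)},(k-1)^{(s_{k-1})},\dots,2^{(s_2)},1^{(s_1)})$ with $k<q$ and $s_k\ge2$ (i.e. $s_q=\dots=s_{k+1}=0$), and $d'=(1,2,\dots,k,k^{(s_k)},(k-1)^{(s_{k-1})},\dots,2^{(s_2)},1^{(s_1)})$, then $|\,[\,d\,]\,|=|\,[\,d'\,]\,|$. (5) If $\sigma_i=\min\{s_i,2\}$ for $1\le i\le q$ and $d'=(1,2,\dots,q,q^{(\sigma_q)},(q-1)^{(\sigma_{q-1})},\dots,2^{(\sigma_2)},1^{(\sigma_1)})$, then $|\,[\,d\,]\,|=|\,[\,d'\,]\,|$.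
   Context: A partition of a positive integer $n$ is a finite non-increasing sequence $\alpha=(\alpha_1,\dots,\alpha_l)$ of positive integers with sum $n$; $\mathcal{P}(n)$ is the set of partitions of $n$, $\alpha_i=0$ for $i>l$, and $\mathcal{P}(n,k)$ is the set of partitions of $n$ with exactly $k$ nonzero parts. The diagonal sequence is $\delta(\alpha)=(d_k)_{k\ge1}$ with $d_k=|\{i:1\le i\le k,\ \alpha_i+i-1\ge k\}|$, trailing zeros omitted; $\Delta(n)=\{\delta(\alpha):\alpha\in\mathcal{P}(n)\}$. For a sequence $d$ that is the diagonal sequence of some partition of some $N$, $[\,d\,]=\{\alpha\in\mathcal{P}(N):\delta(\alpha)=d\}$ and $[\,d\,]_k=[\,d\,]\cap\mathcal{P}(N,k)$. Every diagonal sequence has the form $(1,2,\dots,q,q^{(s_q)},\dots,1^{(s_1)})$ for some $q\ge1$, $s_i\ge0$, where $j^{(s)}$ denotes $s$ consecutive entries equal to $j$; conversely every such sequence is a diagonal sequence. *)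

theory Defs
  imports Main
begin

definition is_partition :: "nat list \<Rightarrow> nat \<Rightarrow> bool" where
  "is_partition \<alpha> n \<longleftrightarrow> sorted_wrt (\<ge>) \<alpha> \<and> (\<forall>x\<in>set \<alpha>. 0 < x) \<and> sum_list \<alpha> = n"

definition partitions :: "nat \<Rightarrow> nat list set" where
  "partitions n = {\<alpha>. is_partition \<alpha> n}"

definition part :: "nat list \<Rightarrow> nat \<Rightarrow> nat" where
  "part \<alpha> i = (if 1 \<le> i \<and> i \<le> length \<alpha> then \<alpha> ! (i - 1) else 0)"

definition diag_entry :: "nat list \<Rightarrow> nat \<Rightarrow> nat" where
  "diag_entry \<alpha> k = card {i. 1 \<le> i \<and> i \<le> k \<and> part \<alpha> i + i - 1 \<ge> k}"

text \<open>Diagonal sequence (d_1, d_2, ...) with trailing zeros omitted. Since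
  alpha_i + i - 1 <= n for a partition of n, d_k = 0 for k > n = sum alpha.\<close>
definition delta :: "nat list \<Rightarrow> nat list" where
  "delta \<alpha> = rev (dropWhile (\<lambda>x. x = 0)
      (rev (map (diag_entry \<alpha>) [1..<sum_list \<alpha> + 1])))"

definition Delta :: "nat \<Rightarrow> nat list set" where
  "Delta n = delta ` partitions n"

definition dclass :: "nat list \<Rightarrow> nat list set" where
  "dclass d = {\<alpha>. is_partition \<alpha> (sum_list \<alpha>) \<and> delta \<alpha> = d}"

definition dclass_k :: "nat list \<Rightarrow> nat \<Rightarrow> nat list set" where
  "dclass_k d k = {\<alpha> \<in> dclass d. length \<alpha> = k}"

definition diagseq :: "nat \<Rightarrow> (nat \<Rightarrow> nat) \<Rightarrow> nat list" where
  "diagseq q s = [1..<q+1] @ concat (map (\<lambda>j. replicate (s j) j) (rev [1..<q+1]))"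

definition ent :: "nat list \<Rightarrow> nat \<Rightarrow> nat" where
  "ent d i = (if 1 \<le> i \<and> i \<le> length d then d ! (i - 1) else 0)"

end

theory Submission
  imports Defs "HOL-Library.More_List"
begin

text \<open>
  Let \<open>T\<^sub>k\<close> be the set of rows \<open>i \<le> k\<close> of \<open>\<alpha>\<close> with \<open>\<alpha>\<^sub>i + i - 1 \<ge> k\<close>, so that
  \<open>d\<^sub>k = |T\<^sub>k|\<close>. As the rows decrease, \<open>T\<^sub>k\<^sub>+\<^sub>1 \<subseteq> admissible_rows k T\<^sub>k\<close>; conversely every
  such chain \<open>T\<^sub>1, T\<^sub>2, \<dots>\<close> with \<open>|T\<^sub>k| = d\<^sub>k\<close> comes from exactly one partition, whose
  \<open>i\<close>-th part counts the \<open>k\<close> with \<open>i \<in> T\<^sub>k\<close>. So \<open>|[d]|\<close> is a number of chains, which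
  is computed one diagonal at a time.

  The staircase \<open>1, \<dots>, q\<close> forces \<open>T\<^sub>k = {1..k}\<close>. If \<open>T\<^sub>k\<close> misses a row \<open>m \<le> k\<close> and
  has only \<open>|T\<^sub>k|\<close> admissible rows, then \<open>T\<^sub>k\<^sub>+\<^sub>1\<close> is \<open>T\<^sub>k\<close> with the rows after \<open>m\<close> moved
  down by one, and this relabelling is a bijection of chains, so an entry \<open>d\<^sub>k\<^sub>+\<^sub>1 = d\<^sub>k\<close>
  can be deleted. Consequently a value repeated more than twice may be repeated just twice,
  which is (5). A set of size \<open>c\<close> with exactly \<open>c\<close> admissible rows is an initial block of
  rows together with a final one; following these blocks gives (4), and counting them gives
  binomial coefficients that sum to \<open>2\<^sup>q\<close> in (2). Forbidding rows beyond \<open>q\<close> leaves a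
  single chain, which is (1), and \<open>(1, \<dots>, m - 1, 1)\<close> leaves \<open>m\<close> choices for its last set,
  which is (3).
\<close>

section \<open>Diagonal entries and the rows reaching a diagonal\<close>

lemma nth_plus_index_le_sum_list:
  fixes xs :: "nat list"
  assumes "\<forall>x\<in>set xs. 0 < x" and "j < length xs"
  shows "xs ! j + j \<le> sum_list xs"
  using assms
proof (induction xs arbitrary: j)
  case (Cons x xs)
  then show ?case by (cases j) fastforce+
qed simp

lemma diag_entry_eq_0:
  assumes "is_partition \<alpha> N" and "N < k"
  shows "diag_entry \<alpha> k = 0"
proof -
  have "part \<alpha> i + i - 1 < k" if "1 \<le> i" "i \<le> k" for i
  proof (cases "i \<le> length \<alpha>")
    case True
    then have "\<alpha> ! (i - 1) + (i - 1) \<le> N"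
      using nth_plus_index_le_sum_list[of \<alpha> "i - 1"] assms(1) that
      unfolding is_partition_def by auto
    then show ?thesis using True that assms(2) unfolding part_def by auto
  qed (use that in \<open>auto simp: part_def\<close>)
  then have "{i. 1 \<le> i \<and> i \<le> k \<and> part \<alpha> i + i - 1 \<ge> k} = {}"
    using leD by blast
  then show ?thesis unfolding diag_entry_def by simp
qed

lemma delta_eq_strip_while: "delta \<alpha> = strip_while ((=) 0) (map (diag_entry \<alpha>) [1..<sum_list \<alpha> + 1])"
proof -
  have "(\<lambda>x::nat. x = 0) = (=) 0" by auto
  then show ?thesis unfolding delta_def strip_while_def by simp
qed

lemma delta_eq_iff:
  assumes "is_partition \<alpha> (sum_list \<alpha>)" and "no_trailing ((=) 0) d"
  shows "delta \<alpha> = d \<longleftrightarrow> (\<forall>k. diag_entry \<alpha> (Suc k) = nth_default 0 d k)"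
proof -
  let ?m = "map (diag_entry \<alpha>) [1..<sum_list \<alpha> + 1]"
  have "nth_default 0 ?m k = diag_entry \<alpha> (Suc k)" for k
    using diag_entry_eq_0[OF assms(1), of "Suc k"] by (auto simp: nth_default_def simp del: upt_Suc)
  then have "nth_default 0 ?m = diag_entry \<alpha> \<circ> Suc" by auto
  moreover have "delta \<alpha> = d \<longleftrightarrow> nth_default 0 ?m = nth_default 0 d"
    unfolding delta_eq_strip_while nth_default_eq_iff using assms(2) by simp
  ultimately show ?thesis by (auto simp: fun_eq_iff)
qed

lemma part_Suc_eq_nth_default: "part \<alpha> (Suc k) = nth_default 0 \<alpha> k"
  unfolding part_def nth_default_def by simp

lemma part_antimono:
  assumes "sorted_wrt (\<ge>) \<alpha>" and "1 \<le> j" and "j \<le> i"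
  shows "part \<alpha> i \<le> part \<alpha> j"
  using assms sorted_wrt_nth_less[OF assms(1), of "j - 1" "i - 1"]
  by (cases "j = i") (auto simp: part_def)

lemma no_trailing_zero_if_positive: "\<forall>x\<in>set xs. 0 < (x::nat) \<Longrightarrow> no_trailing ((=) 0) xs"
  by (auto simp: no_trailing_unfold)

lemma positive_list_eqI_part:
  fixes \<alpha> \<beta> :: "nat list"
  assumes "\<forall>x\<in>set \<alpha>. 0 < x" and "\<forall>x\<in>set \<beta>. 0 < x" and "\<forall>i\<ge>1. part \<alpha> i = part \<beta> i"
  shows "\<alpha> = \<beta>"
proof -
  have "no_trailing ((=) 0) \<alpha>" "no_trailing ((=) 0) \<beta>"
    using assms(1,2) by (simp_all add: no_trailing_zero_if_positive)
  moreover have "nth_default 0 \<alpha> = nth_default 0 \<beta>"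
    using assms(3) by (auto simp: fun_eq_iff part_Suc_eq_nth_default[symmetric])
  ultimately show ?thesis
    by (metis nth_default_eq_iff strip_while_idem)
qed

lemma part_pos_iff:
  assumes "\<forall>x\<in>set \<alpha>. 0 < x"
  shows "0 < part \<alpha> i \<longleftrightarrow> 1 \<le> i \<and> i \<le> length \<alpha>"
  using assms by (auto simp: part_def)

definition diag_rows :: "nat list \<Rightarrow> nat \<Rightarrow> nat set" where
  "diag_rows \<alpha> k = {i. 1 \<le> i \<and> i \<le> k \<and> k \<le> part \<alpha> i + i - 1}"

lemma diag_entry_eq_card_diag_rows: "diag_entry \<alpha> k = card (diag_rows \<alpha> k)"
  unfolding diag_entry_def diag_rows_def by simp

lemma diag_rows_subset: "diag_rows \<alpha> k \<subseteq> {1..k}"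
  unfolding diag_rows_def by auto

lemma finite_diag_rows [simp]: "finite (diag_rows \<alpha> k)"
  using diag_rows_subset finite_subset by blast

lemma diag_rows_0 [simp]: "diag_rows \<alpha> 0 = {}"
  unfolding diag_rows_def by auto

lemma diagonals_of_row:
  assumes "1 \<le> i"
  shows "{k. i \<in> diag_rows \<alpha> k} = {i..<i + part \<alpha> i}"
  using assms unfolding diag_rows_def by auto

lemma card_diagonals_of_row:
  assumes "1 \<le> i"
  shows "card {k. i \<in> diag_rows \<alpha> k} = part \<alpha> i"
  using diagonals_of_row[OF assms] by simp

text \<open>Row \<open>i \<le> k\<close> can reach diagonal \<open>k + 1\<close> only if it reaches diagonal \<open>k\<close>, and row
  \<open>i \<ge> 2\<close> only if row \<open>i - 1\<close>, which is at least as long, reaches diagonal \<open>k\<close>.\<close>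
definition admissible_rows :: "nat \<Rightarrow> nat set \<Rightarrow> nat set" where
  "admissible_rows k S = {i. 1 \<le> i \<and> i \<le> Suc k \<and> (i \<le> k \<longrightarrow> i \<in> S) \<and> (2 \<le> i \<longrightarrow> i - 1 \<in> S)}"

lemma admissible_rows_subset: "admissible_rows k S \<subseteq> {1..Suc k}"
  unfolding admissible_rows_def by auto

lemma finite_admissible_rows [simp]: "finite (admissible_rows k S)"
  using admissible_rows_subset finite_subset by blast

lemma diag_rows_Suc_subset:
  assumes "sorted_wrt (\<ge>) \<alpha>"
  shows "diag_rows \<alpha> (Suc k) \<subseteq> admissible_rows k (diag_rows \<alpha> k)"
proof
  fix i assume i: "i \<in> diag_rows \<alpha> (Suc k)"
  have "part \<alpha> i \<le> part \<alpha> (i - 1)" if "2 \<le> i"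
    using part_antimono[OF assms, of "i - 1" i] that by simp
  then show "i \<in> admissible_rows k (diag_rows \<alpha> k)"
    using i unfolding diag_rows_def admissible_rows_def by auto
qed

section \<open>Chains of row sets\<close>

lemma finite_subsets_of_card [simp]: "finite A \<Longrightarrow> finite {T. T \<subseteq> A \<and> card T = x}"
  by (rule finite_subset[of _ "Pow A"]) auto

primrec chains :: "nat set \<Rightarrow> nat \<Rightarrow> nat set \<Rightarrow> nat list \<Rightarrow> nat set list set" where
  "chains R k S [] = {[]}"
| "chains R k S (x # ds) =
     (\<Union>T \<in> {T. T \<subseteq> admissible_rows k S \<inter> R \<and> card T = x}. (#) T ` chains R (Suc k) T ds)"

primrec chain_count :: "nat set \<Rightarrow> nat \<Rightarrow> nat set \<Rightarrow> nat list \<Rightarrow> nat" where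
  "chain_count R k S [] = 1"
| "chain_count R k S (x # ds) =
     (\<Sum>T | T \<subseteq> admissible_rows k S \<inter> R \<and> card T = x. chain_count R (Suc k) T ds)"

lemma finite_chains [simp]: "finite (chains R k S ds)"
  by (induction ds arbitrary: k S) auto

lemma card_chains: "card (chains R k S ds) = chain_count R k S ds"
proof (induction ds arbitrary: k S)
  case (Cons x ds)
  have "card (chains R k S (x # ds)) =
      (\<Sum>T | T \<subseteq> admissible_rows k S \<inter> R \<and> card T = x. card ((#) T ` chains R (Suc k) T ds))"
    by (subst chains.simps, rule card_UN_disjoint) auto
  also have "\<dots> = chain_count R k S (x # ds)"
    by (simp add: card_image Cons.IH)
  finally show ?case .
qed simp

lemma length_chains: "Ts \<in> chains R k S ds \<Longrightarrow> length Ts = length ds"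
  by (induction ds arbitrary: k S Ts) auto

lemma Cons_in_chains_iff:
  "T # Ts \<in> chains R k S (x # ds) \<longleftrightarrow>
     T \<subseteq> admissible_rows k S \<inter> R \<and> card T = x \<and> Ts \<in> chains R (Suc k) T ds"
  by auto

lemma map_in_chains_iff:
  "map T [Suc k..<Suc k + length ds] \<in> chains R k (T k) ds \<longleftrightarrow>
     (\<forall>j<length ds. T (Suc (k + j)) \<subseteq> admissible_rows (k + j) (T (k + j)) \<inter> R
        \<and> card (T (Suc (k + j))) = ds ! j)"
proof (induction ds arbitrary: k)
  case (Cons x ds)
  have split: "map T [Suc k..<Suc k + length (x # ds)] =
      T (Suc k) # map T [Suc (Suc k)..<Suc (Suc k) + length ds]"
    by (simp add: upt_rec)
  show ?case
    unfolding split Cons_in_chains_iff Cons.IH[of "Suc k"]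
    by (simp add: All_less_Suc2 del: upt_Suc)
qed simp

section \<open>Partitions as chains\<close>

lemma interval_of_downward_closed:
  fixes K :: "nat set"
  assumes "finite K" and lower: "\<And>k. k \<in> K \<Longrightarrow> i \<le> k"
    and closed: "\<And>k. Suc k \<in> K \<Longrightarrow> i \<le> k \<Longrightarrow> k \<in> K"
  shows "K = {i..<i + card K}"
proof (cases "K = {}")
  case False
  define M where "M = Max K"
  have M: "M \<in> K" "\<And>k. k \<in> K \<Longrightarrow> k \<le> M"
    using False assms(1) by (auto simp: M_def)
  have fill: "k \<in> K" if "i \<le> k" "k \<le> M" for k
    using that(2)
  proof (induction rule: inc_induct)
    case (step n)
    have "i \<le> n" using \<open>k \<le> n\<close> that(1) by simp
    then show ?case by (rule closed[OF \<open>Suc n \<in> K\<close>])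
  qed (rule M(1))
  have "K = {i..M}"
    using fill lower M(2) by (meson atLeastAtMost_iff set_eqI)
  then show ?thesis by auto
qed simp

lemma partition_of_antimono:
  fixes r :: "nat \<Rightarrow> nat"
  assumes antimono: "\<And>i. 1 \<le> i \<Longrightarrow> r (Suc i) \<le> r i" and vanish: "\<And>i. L < i \<Longrightarrow> r i = 0"
  obtains \<alpha> where "is_partition \<alpha> (sum_list \<alpha>)" and "\<And>i. 1 \<le> i \<Longrightarrow> part \<alpha> i = r i"
proof -
  have le: "r j \<le> r i" if "1 \<le> i" "i \<le> j" for i j
  proof (rule lift_Suc_antimono_le_ivl[of "{1..}" r i j])
    show "r (Suc n) \<le> r n" if "n \<in> {1..}" for n
      using that antimono by simp
  qed (use that in auto)
  define \<alpha> where "\<alpha> = takeWhile (\<lambda>x. 0 < x) (map r [1..<L + 1])"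
  have len: "length \<alpha> \<le> L"
    unfolding \<alpha>_def by (metis diff_add_inverse2 length_map length_takeWhile_le length_upt)
  have nth: "\<alpha> ! j = r (Suc j)" if "j < length \<alpha>" for j
    using that len takeWhile_nth[of j "\<lambda>x. 0 < x" "map r [1..<L + 1]"]
    unfolding \<alpha>_def by (simp del: upt_Suc)
  have part: "part \<alpha> i = r i" if "1 \<le> i" for i
  proof (cases "i \<le> length \<alpha>")
    case True
    then show ?thesis using nth[of "i - 1"] that by (simp add: part_def)
  next
    case False
    have "r (Suc (length \<alpha>)) = 0"
    proof (cases "length \<alpha> < L")
      case True
      then show ?thesis
        using nth_length_takeWhile[of "\<lambda>x. 0 < x" "map r [1..<L + 1]"]
        unfolding \<alpha>_def by (simp del: upt_Suc)
    qed (use vanish len in simp)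
    then show ?thesis using le[of "Suc (length \<alpha>)" i] False by (simp add: part_def)
  qed
  have "sorted_wrt (\<ge>) \<alpha>"
    unfolding sorted_wrt_iff_nth_less using nth le by auto
  moreover have "\<forall>x\<in>set \<alpha>. 0 < x"
    unfolding \<alpha>_def by (auto dest: set_takeWhileD)
  ultimately show ?thesis using that part by (simp add: is_partition_def)
qed

lemma admissible_chain_subset:
  assumes "T 0 = {}" and "\<And>k. T (Suc k) \<subseteq> admissible_rows k (T k)"
  shows "T k \<subseteq> {1..k}"
  using assms admissible_rows_subset by (cases k) blast+

lemma admissible_chain_diagonals_of_row:
  assumes "T 0 = {}" and adm: "\<And>k. T (Suc k) \<subseteq> admissible_rows k (T k)"
    and "finite {k. i \<in> T k}" and "1 \<le> i"
  shows "{k. i \<in> T k} = {i..<i + card {k. i \<in> T k}}"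
proof (rule interval_of_downward_closed[OF assms(3)])
  show "i \<le> k" if "k \<in> {k. i \<in> T k}" for k
    using that admissible_chain_subset[OF assms(1,2), of k] by auto
  show "k \<in> {k. i \<in> T k}" if "Suc k \<in> {k. i \<in> T k}" "i \<le> k" for k
    using that adm[of k] by (auto simp: admissible_rows_def)
qed

lemma admissible_chain_card_diagonals_antimono:
  assumes T0: "T 0 = {}" and adm: "\<And>k. T (Suc k) \<subseteq> admissible_rows k (T k)"
    and "finite {k. i \<in> T k}" and "1 \<le> i"
  shows "card {k. Suc i \<in> T k} \<le> card {k. i \<in> T k}"
proof -
  have "{k. Suc i \<in> T k} \<subseteq> Suc ` {k. i \<in> T k}"
  proof
    fix k assume "k \<in> {k. Suc i \<in> T k}"
    then obtain k' where "k = Suc k'" "Suc i \<in> T (Suc k')"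
      using T0 by (cases k) auto
    then show "k \<in> Suc ` {k. i \<in> T k}"
      using adm[of k'] assms(4) by (auto simp: admissible_rows_def)
  qed
  then show ?thesis
    using assms(3) by (metis card_image card_mono finite_imageI inj_Suc)
qed

text \<open>Row \<open>i\<close> of the partition is the number of diagonals whose set contains \<open>i\<close>.\<close>
lemma partition_of_admissible_chain:
  assumes T0: "T 0 = {}" and adm: "\<And>k. T (Suc k) \<subseteq> admissible_rows k (T k)"
    and vanish: "\<And>k. L \<le> k \<Longrightarrow> T (Suc k) = {}"
  obtains \<alpha> where "is_partition \<alpha> (sum_list \<alpha>)" and "diag_rows \<alpha> = T"
proof -
  have T_sub: "T k \<subseteq> {1..k}" for k
    by (rule admissible_chain_subset[OF T0 adm])
  have T_zero: "T k = {}" if "L < k" for k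
    using vanish[of "k - 1"] that by (cases k) auto
  have "{k. i \<in> T k} \<subseteq> {..L}" for i
    using T_zero by (metis atMost_iff empty_iff mem_Collect_eq not_le subsetI)
  then have fin: "finite {k. i \<in> T k}" for i
    using finite_subset by blast
  have "card {k. i \<in> T k} = 0" if "L < i" for i
  proof -
    have "i \<notin> T k" for k
      using T_zero[of k] T_sub[of k] that by (cases "L < k") auto
    then show ?thesis by simp
  qed
  then obtain \<alpha> where \<alpha>: "is_partition \<alpha> (sum_list \<alpha>)"
    "\<And>i. 1 \<le> i \<Longrightarrow> part \<alpha> i = card {k. i \<in> T k}"
    using partition_of_antimono[of "\<lambda>i. card {k. i \<in> T k}" L]
      admissible_chain_card_diagonals_antimono[OF T0 adm fin] by blast
  have "i \<in> diag_rows \<alpha> k \<longleftrightarrow> i \<in> T k" for i k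
  proof (cases "1 \<le> i")
    case True
    then have "i \<in> diag_rows \<alpha> k \<longleftrightarrow> k \<in> {i..<i + card {k. i \<in> T k}}"
      using \<alpha>(2) by (auto simp: diag_rows_def)
    also have "\<dots> \<longleftrightarrow> k \<in> {k. i \<in> T k}"
      using admissible_chain_diagonals_of_row[OF T0 adm fin True] by metis
    finally show ?thesis by simp
  next
    case False
    then show ?thesis using T_sub[of k] by (auto simp: diag_rows_def)
  qed
  then show ?thesis using that \<alpha>(1) by blast
qed

definition dclass_on :: "nat set \<Rightarrow> nat list \<Rightarrow> nat list set" where
  "dclass_on R d = {\<alpha> \<in> dclass d. \<forall>i. 0 < part \<alpha> i \<longrightarrow> i \<in> R}"

lemma dclass_on_UNIV [simp]: "dclass_on UNIV d = dclass d"
  unfolding dclass_on_def by simp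

lemma in_diag_rows_self_iff: "i \<in> diag_rows \<alpha> i \<longleftrightarrow> 0 < part \<alpha> i"
  by (cases i) (auto simp: diag_rows_def part_def)

lemma part_pos_of_in_diag_rows: "i \<in> diag_rows \<alpha> k \<Longrightarrow> 0 < part \<alpha> i"
  unfolding diag_rows_def by auto

lemma card_diag_rows_of_dclass:
  assumes "no_trailing ((=) 0) d" and "\<alpha> \<in> dclass d"
  shows "card (diag_rows \<alpha> (Suc k)) = nth_default 0 d k"
  using assms delta_eq_iff[of \<alpha> d]
  by (simp add: dclass_def diag_entry_eq_card_diag_rows)

lemma diag_rows_in_chains:
  assumes "no_trailing ((=) 0) d" and "\<alpha> \<in> dclass_on R d"
  shows "map (diag_rows \<alpha>) [1..<length d + 1] \<in> chains R 0 {} d"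
proof -
  have "\<alpha> \<in> dclass d" and rows: "\<forall>i. 0 < part \<alpha> i \<longrightarrow> i \<in> R"
    using assms(2) by (auto simp: dclass_on_def)
  then have "sorted_wrt (\<ge>) \<alpha>"
    by (simp add: dclass_def is_partition_def)
  then have "diag_rows \<alpha> (Suc j) \<subseteq> admissible_rows j (diag_rows \<alpha> j) \<inter> R" for j
    using diag_rows_Suc_subset rows part_pos_of_in_diag_rows by blast
  moreover have "card (diag_rows \<alpha> (Suc j)) = d ! j" if "j < length d" for j
    using card_diag_rows_of_dclass[OF assms(1) \<open>\<alpha> \<in> dclass d\<close>] that by (simp add: nth_default_nth)
  ultimately show ?thesis
    using map_in_chains_iff[of "diag_rows \<alpha>" 0 d R] by simp
qed

lemma inj_on_diag_rows_dclass:
  assumes "no_trailing ((=) 0) d"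
  shows "inj_on (\<lambda>\<alpha>. map (diag_rows \<alpha>) [1..<length d + 1]) (dclass d)"
proof (rule inj_onI)
  fix \<alpha> \<beta> assume \<alpha>: "\<alpha> \<in> dclass d" and \<beta>: "\<beta> \<in> dclass d"
    and eq: "map (diag_rows \<alpha>) [1..<length d + 1] = map (diag_rows \<beta>) [1..<length d + 1]"
  have "diag_rows \<alpha> k = diag_rows \<beta> k" for k
  proof (cases "k = 0 \<or> length d < k")
    case True
    then show ?thesis
      using card_diag_rows_of_dclass[OF assms \<alpha>, of "k - 1"]
        card_diag_rows_of_dclass[OF assms \<beta>, of "k - 1"]
      by (auto simp: nth_default_beyond)
  next
    case False
    then have "k - 1 < length d" "Suc (k - 1) = k" by auto
    then show ?thesis
      using arg_cong[OF eq, of "\<lambda>xs. xs ! (k - 1)"] by (simp del: upt_Suc)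
  qed
  then have "diag_rows \<alpha> = diag_rows \<beta>" ..
  then have "\<forall>i\<ge>1. part \<alpha> i = part \<beta> i"
    using card_diagonals_of_row by metis
  then show "\<alpha> = \<beta>"
    using \<alpha> \<beta> positive_list_eqI_part by (simp add: dclass_def is_partition_def)
qed

lemma partition_of_chain:
  assumes "no_trailing ((=) 0) d" and "Ts \<in> chains R 0 {} d"
  obtains \<alpha> where "\<alpha> \<in> dclass_on R d" and "map (diag_rows \<alpha>) [1..<length d + 1] = Ts"
proof -
  define T where "T = nth_default {} ({} # Ts)"
  have T0: "T 0 = {}" by (simp add: T_def)
  have "length Ts = length d" by (rule length_chains[OF assms(2)])
  then have Ts_eq: "Ts = map T [1..<length d + 1]"
    by (intro nth_equalityI) (auto simp: T_def nth_default_nth simp del: upt_Suc)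
  then have chain: "T (Suc j) \<subseteq> admissible_rows j (T j) \<inter> R \<and> card (T (Suc j)) = d ! j"
    if "j < length d" for j
    using assms(2) map_in_chains_iff[of T 0 d R] T0 that by simp
  have beyond: "T (Suc j) = {}" if "length d \<le> j" for j
    using that \<open>length Ts = length d\<close> by (simp add: T_def nth_default_beyond)
  have adm: "T (Suc j) \<subseteq> admissible_rows j (T j)" for j
    using chain[of j] beyond[of j] by (cases "j < length d") auto
  obtain \<alpha> where part: "is_partition \<alpha> (sum_list \<alpha>)" and rows: "diag_rows \<alpha> = T"
    by (rule partition_of_admissible_chain[OF T0 adm beyond])
  have "diag_entry \<alpha> (Suc k) = nth_default 0 d k" for k
    using chain[of k] beyond[of k]
    by (cases "k < length d") (auto simp: diag_entry_eq_card_diag_rows rows nth_default_def)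
  then have "\<alpha> \<in> dclass d"
    using delta_eq_iff[OF part assms(1)] part by (simp add: dclass_def)
  moreover have "i \<in> R" if "0 < part \<alpha> i" for i
  proof -
    have "i \<in> T i" using that in_diag_rows_self_iff rows by blast
    moreover obtain j where "i = Suc j" using T0 \<open>i \<in> T i\<close> by (cases i) auto
    ultimately show ?thesis using chain[of j] beyond[of j] by (cases "j < length d") auto
  qed
  ultimately show ?thesis
    using that rows Ts_eq by (auto simp: dclass_on_def)
qed

theorem card_dclass_on_eq_chain_count:
  assumes "no_trailing ((=) 0) d"
  shows "card (dclass_on R d) = chain_count R 0 {} d"
proof -
  let ?\<Phi> = "\<lambda>\<alpha>. map (diag_rows \<alpha>) [1..<length d + 1]"
  have "bij_betw ?\<Phi> (dclass_on R d) (chains R 0 {} d)"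
  proof (rule bij_betw_imageI)
    show "inj_on ?\<Phi> (dclass_on R d)"
      by (rule inj_on_subset[OF inj_on_diag_rows_dclass[OF assms]]) (auto simp: dclass_on_def)
    show "?\<Phi> ` dclass_on R d = chains R 0 {} d"
    proof
      show "?\<Phi> ` dclass_on R d \<subseteq> chains R 0 {} d"
        using diag_rows_in_chains[OF assms] by blast
      show "chains R 0 {} d \<subseteq> ?\<Phi> ` dclass_on R d"
      proof
        fix Ts assume "Ts \<in> chains R 0 {} d"
        then obtain \<alpha> where "\<alpha> \<in> dclass_on R d" "?\<Phi> \<alpha> = Ts"
          by (rule partition_of_chain[OF assms])
        then show "Ts \<in> ?\<Phi> ` dclass_on R d" by blast
      qed
    qed
  qed
  then show ?thesis
    by (simp add: bij_betw_same_card card_chains)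
qed

section \<open>Reducing the chain count\<close>

lemma subsets_of_card_self: "finite A \<Longrightarrow> {T. T \<subseteq> A \<and> card T = card A} = {A}"
  using card_subset_eq by blast

lemma subsets_of_card_gt:
  assumes "finite A" and "card A < x"
  shows "{T. T \<subseteq> A \<and> card T = x} = {}"
proof -
  have "card T \<noteq> x" if "T \<subseteq> A" for T
    using card_mono[OF assms(1) that] assms(2) by simp
  then show ?thesis by blast
qed

lemma subsets_of_card_image:
  assumes "inj_on f A"
  shows "{T. T \<subseteq> f ` A \<and> card T = x} = (`) f ` {T. T \<subseteq> A \<and> card T = x}"
proof (intro set_eqI iffI)
  fix T assume "T \<in> {T. T \<subseteq> f ` A \<and> card T = x}"
  then obtain U where "U \<subseteq> A" "T = f ` U" "card T = x"
    by (auto elim: subset_imageE)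
  then show "T \<in> (`) f ` {T. T \<subseteq> A \<and> card T = x}"
    using card_image[OF inj_on_subset[OF assms]] by auto
qed (use assms card_image inj_on_subset in fastforce)

lemma chain_count_Cons_exact:
  assumes "card (admissible_rows k S \<inter> R) = x"
  shows "chain_count R k S (x # ds) = chain_count R (Suc k) (admissible_rows k S \<inter> R) ds"
proof -
  have fin: "finite (admissible_rows k S \<inter> R)" by simp
  show ?thesis
    unfolding chain_count.simps assms[symmetric] subsets_of_card_self[OF fin] by simp
qed

lemma chain_count_Cons_eq_0:
  assumes "card (admissible_rows k S \<inter> R) < x"
  shows "chain_count R k S (x # ds) = 0"
proof -
  have fin: "finite (admissible_rows k S \<inter> R)" by simp
  show ?thesis
    unfolding chain_count.simps subsets_of_card_gt[OF fin assms] by simp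
qed

lemma admissible_rows_atLeastAtMost: "admissible_rows k {1..k} = {1..Suc k}"
  unfolding admissible_rows_def by auto

lemma chain_count_staircase:
  assumes "{1..q} \<subseteq> R"
  shows "chain_count R 0 {} ([1..<q + 1] @ ds) = chain_count R q {1..q} ds"
  using assms
proof (induction q arbitrary: ds)
  case (Suc q)
  have adm: "admissible_rows q {1..q} \<inter> R = {1..Suc q}"
    unfolding admissible_rows_atLeastAtMost using Suc.prems by blast
  have "chain_count R 0 {} ([1..<Suc q + 1] @ ds) = chain_count R 0 {} ([1..<q + 1] @ Suc q # ds)"
    by simp
  also have "\<dots> = chain_count R q {1..q} (Suc q # ds)"
    by (rule Suc.IH) (use Suc.prems in auto)
  also have "\<dots> = chain_count R (Suc q) {1..Suc q} ds"
    using chain_count_Cons_exact[of q "{1..q}" R "Suc q" ds, unfolded adm] by simp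
  finally show ?case .
qed simp

lemma chain_count_append_cong:
  assumes "\<And>k S. chain_count R k S ds = chain_count R k S ds'"
  shows "chain_count R k S (pre @ ds) = chain_count R k S (pre @ ds')"
  using assms by (induction pre arbitrary: k S) simp_all

lemma obtain_gap:
  assumes "S \<subseteq> {1..k}" and "card S < k"
  obtains m where "1 \<le> m" "m \<le> k" "m \<notin> S"
proof -
  have "\<not> {1..k} \<subseteq> S"
  proof
    assume "{1..k} \<subseteq> S"
    then have "card {1..k} \<le> card S"
      using card_mono finite_subset[OF assms(1)] by blast
    then show False using assms(2) by simp
  qed
  then obtain m where "m \<in> {1..k}" "m \<notin> S" by blast
  then show ?thesis by (intro that) auto
qed

lemma obtain_first_gap:
  assumes "S \<subseteq> {1..k}" and "card S < k"
  obtains m where "1 \<le> m" "m \<le> k" "m \<notin> S" "{1..m - 1} \<subseteq> S"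
proof -
  obtain m0 where "1 \<le> m0" "m0 \<le> k" "m0 \<notin> S"
    by (rule obtain_gap[OF assms])
  then have ne: "{1..k} - S \<noteq> {}" by auto
  define m where "m = Min ({1..k} - S)"
  have m: "m \<in> {1..k} - S" "\<And>j. j \<in> {1..k} - S \<Longrightarrow> m \<le> j"
    unfolding m_def using Min_in[OF _ ne] Min_le by auto
  have "j \<in> S" if "j \<in> {1..m - 1}" for j
  proof (rule ccontr)
    assume "j \<notin> S"
    then have "m \<le> j" using that m(1) by (intro m(2)) auto
    then show False using that m(1) by auto
  qed
  then have "{1..m - 1} \<subseteq> S" by blast
  with m(1) show ?thesis by (intro that) auto
qed

definition skip :: "nat \<Rightarrow> nat \<Rightarrow> nat" where
  "skip m i = (if i < m then i else Suc i)"

lemma inj_skip: "inj (skip m)"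
  unfolding inj_def skip_def by auto

lemma in_skip_image_iff: "i \<in> skip m ` S \<longleftrightarrow> (i < m \<and> i \<in> S) \<or> (m < i \<and> i - 1 \<in> S)"
proof
  assume "i \<in> skip m ` S"
  then obtain j where "j \<in> S" "i = skip m j" by blast
  then show "(i < m \<and> i \<in> S) \<or> (m < i \<and> i - 1 \<in> S)"
    by (cases "j < m") (auto simp: skip_def)
next
  assume "(i < m \<and> i \<in> S) \<or> (m < i \<and> i - 1 \<in> S)"
  then have "i = skip m i \<and> i \<in> S \<or> i = skip m (i - 1) \<and> i - 1 \<in> S"
    by (auto simp: skip_def)
  then show "i \<in> skip m ` S" by blast
qed

lemma admissible_rows_skip:
  assumes "m \<notin> S" and "1 \<le> m" and "m \<le> k"
  shows "admissible_rows (Suc k) (skip m ` S) = skip (Suc m) ` admissible_rows k S"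
proof (rule set_eqI)
  fix i
  consider "i < m" | "i = m" | "i = Suc m" | "Suc m < i" by linarith
  then show "i \<in> admissible_rows (Suc k) (skip m ` S) \<longleftrightarrow> i \<in> skip (Suc m) ` admissible_rows k S"
    using assms by cases (auto simp: in_skip_image_iff admissible_rows_def)
qed

text \<open>Relabelling rows by \<open>skip (Suc m)\<close> maps the chains from \<open>(k, S)\<close> bijectively onto
  those from \<open>(Suc k, skip m ` S)\<close>.\<close>
lemma chain_count_skip:
  assumes "m \<notin> S" and "1 \<le> m" and "m \<le> k"
  shows "chain_count UNIV (Suc k) (skip m ` S) ds = chain_count UNIV k S ds"
  using assms
proof (induction ds arbitrary: k S m)
  case (Cons x ds)
  let ?sets = "{T. T \<subseteq> admissible_rows k S \<and> card T = x}"
  have inj: "inj_on (skip (Suc m)) A" for A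
    using inj_skip inj_on_subset by blast
  have IH: "chain_count UNIV (Suc (Suc k)) (skip (Suc m) ` T) ds = chain_count UNIV (Suc k) T ds"
    if "T \<in> ?sets" for T
  proof (rule Cons.IH)
    show "Suc m \<notin> T"
      using that Cons.prems(1,2) unfolding admissible_rows_def by force
  qed (use Cons.prems in auto)
  have "chain_count UNIV (Suc k) (skip m ` S) (x # ds) =
      (\<Sum>T \<in> (`) (skip (Suc m)) ` ?sets. chain_count UNIV (Suc (Suc k)) T ds)"
    using admissible_rows_skip[OF Cons.prems] subsets_of_card_image[OF inj] by simp
  also have "\<dots> = (\<Sum>T \<in> ?sets. chain_count UNIV (Suc (Suc k)) (skip (Suc m) ` T) ds)"
    by (rule sum.reindex[OF inj_on_image[OF inj], unfolded comp_def])
  also have "\<dots> = chain_count UNIV k S (x # ds)"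
    using IH by simp
  finally show ?case .
qed simp

lemma admissible_rows_subset_skip:
  assumes "m \<notin> S" and "1 \<le> m" and "m \<le> k"
  shows "admissible_rows k S \<subseteq> skip m ` S"
proof
  fix i assume i: "i \<in> admissible_rows k S"
  then have "i \<noteq> m" "i \<noteq> Suc m"
    using assms by (auto simp: admissible_rows_def)
  then show "i \<in> skip m ` S"
    using i assms by (auto simp: admissible_rows_def in_skip_image_iff)
qed

lemma card_skip_image [simp]: "card (skip m ` S) = card S"
  using card_image[OF inj_on_subset[OF inj_skip]] by blast

lemma card_admissible_rows_le:
  assumes "finite S" and "m \<notin> S" and "1 \<le> m" and "m \<le> k"
  shows "card (admissible_rows k S) \<le> card S"
  using card_mono[OF finite_imageI[OF assms(1)] admissible_rows_subset_skip[OF assms(2-)]]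
  by simp

lemma admissible_rows_eq_skip_image:
  assumes "finite S" and "m \<notin> S" and "1 \<le> m" and "m \<le> k"
    and "card (admissible_rows k S) = card S"
  shows "admissible_rows k S = skip m ` S"
  using assms by (intro card_subset_eq admissible_rows_subset_skip) simp_all

lemma card_admissible_rows_less:
  assumes "finite S" and "m \<notin> S" and "1 \<le> m"
    and "j \<in> S" and "m < j" and "Suc j \<notin> S" and "Suc j \<le> k"
  shows "card (admissible_rows k S) < card S"
proof -
  have "Suc j \<notin> admissible_rows k S"
    using assms(6,7) by (simp add: admissible_rows_def)
  moreover have "m \<le> k" using assms(5,7) by simp
  ultimately have "admissible_rows k S \<subseteq> skip m ` S - {Suc j}"
    using admissible_rows_subset_skip[OF assms(2,3)] by blast
  moreover have "Suc j \<in> skip m ` S"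
    using assms(4,5) by (auto simp: in_skip_image_iff)
  ultimately have "card (admissible_rows k S) \<le> card S - 1"
    using card_mono[of "skip m ` S - {Suc j}"] assms(1) by (simp add: card_Diff_singleton)
  moreover have "0 < card S" using assms(1,4) card_gt_0_iff by blast
  ultimately show ?thesis by simp
qed

lemma chain_count_Cons_stay:
  assumes "S \<subseteq> {1..k}" and "card S < k" and "card (admissible_rows k S) = card S"
  shows "chain_count UNIV k S (card S # ds) = chain_count UNIV k S ds"
proof -
  obtain m where m: "1 \<le> m" "m \<le> k" "m \<notin> S" by (rule obtain_gap[OF assms(1,2)])
  have "finite S" using assms(1) finite_subset by blast
  have "chain_count UNIV k S (card S # ds) = chain_count UNIV (Suc k) (admissible_rows k S) ds"
    using chain_count_Cons_exact[of k S UNIV] assms(3) by simp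
  also have "\<dots> = chain_count UNIV (Suc k) (skip m ` S) ds"
    using admissible_rows_eq_skip_image[OF \<open>finite S\<close> m(3,1,2) assms(3)] by simp
  also have "\<dots> = chain_count UNIV k S ds"
    by (rule chain_count_skip[OF m(3,1,2)])
  finally show ?thesis .
qed

lemma chain_count_replicate_stay:
  assumes "S \<subseteq> {1..k}" and "card S < k" and "card (admissible_rows k S) = card S"
  shows "chain_count UNIV k S (replicate r (card S) @ ds) = chain_count UNIV k S ds"
  using chain_count_Cons_stay[OF assms] by (induction r) simp_all

lemma card_admissible_rows_of_card_pred:
  assumes "T \<subseteq> {1..Suc k}" and "card T = k"
  shows "card (admissible_rows (Suc k) T) = k"
proof -
  obtain m where m: "1 \<le> m" "m \<le> Suc k" "m \<notin> T"
    using obtain_gap[OF assms(1)] assms(2) by auto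
  have T: "T = {1..Suc k} - {m}"
    using assms m by (intro card_subset_eq) auto
  have "i \<in> admissible_rows (Suc k) T" if "i \<in> skip m ` T" for i
    using that m unfolding in_skip_image_iff T admissible_rows_def by auto
  then have "admissible_rows (Suc k) T = skip m ` T"
    using admissible_rows_subset_skip[OF m(3,1), of "Suc k"] m(2) by blast
  then show ?thesis using assms(2) by simp
qed

lemma chain_count_full_repeat:
  "chain_count UNIV k {1..k} (k # k # ds) = chain_count UNIV k {1..k} (k # ds)"
proof -
  have stay: "chain_count UNIV (Suc k) T (k # ds) = chain_count UNIV (Suc k) T ds"
    if "T \<in> {T. T \<subseteq> {1..Suc k} \<and> card T = k}" for T
    using chain_count_Cons_stay[of T "Suc k" ds] card_admissible_rows_of_card_pred[of T k] that
    by simp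
  have step: "chain_count UNIV k {1..k} (k # ds') =
      (\<Sum>T | T \<subseteq> {1..Suc k} \<and> card T = k. chain_count UNIV (Suc k) T ds')" for ds'
    unfolding chain_count.simps(2)[of UNIV k "{1..k}"] admissible_rows_atLeastAtMost by simp
  have "chain_count UNIV k {1..k} (k # k # ds) =
      (\<Sum>T | T \<subseteq> {1..Suc k} \<and> card T = k. chain_count UNIV (Suc k) T (k # ds))"
    by (rule step)
  also have "\<dots> = (\<Sum>T | T \<subseteq> {1..Suc k} \<and> card T = k. chain_count UNIV (Suc k) T ds)"
    using stay by (rule sum.cong[OF refl])
  also have "\<dots> = chain_count UNIV k {1..k} (k # ds)"
    by (rule step[symmetric])
  finally show ?thesis .
qed

lemma chain_count_gap_repeat:
  assumes "S \<subseteq> {1..k}" and "card S < k"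
  shows "chain_count UNIV k S (card S # card S # ds) = chain_count UNIV k S (card S # ds)"
proof -
  obtain m where m: "1 \<le> m" "m \<le> k" "m \<notin> S" by (rule obtain_gap[OF assms])
  have "finite S" using assms finite_subset by blast
  consider "card (admissible_rows k S) < card S" | "card (admissible_rows k S) = card S"
    using card_admissible_rows_le[OF \<open>finite S\<close> m(3,1,2)] by linarith
  then show ?thesis
  proof cases
    case 1
    have zero: "chain_count UNIV k S (card S # ds') = 0" for ds'
      by (rule chain_count_Cons_eq_0) (use 1 in simp)
    show ?thesis by (simp only: zero)
  next
    case 2
    define S' where "S' = admissible_rows k S"
    have "S' = skip m ` S"
      unfolding S'_def by (rule admissible_rows_eq_skip_image[OF \<open>finite S\<close> m(3,1,2) 2])
    then have "card (admissible_rows (Suc k) S') = card S'"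
      using admissible_rows_skip[OF m(3,1,2)] 2 by (simp add: S'_def)
    moreover have "S' \<subseteq> {1..Suc k}" "card S' = card S"
      using admissible_rows_subset 2 by (auto simp: S'_def)
    ultimately have stay: "chain_count UNIV (Suc k) S' (card S # ds) = chain_count UNIV (Suc k) S' ds"
      using chain_count_Cons_stay[of S' "Suc k" ds] assms(2) by simp
    have exact: "chain_count UNIV k S (card S # ds') = chain_count UNIV (Suc k) S' ds'" for ds'
      using chain_count_Cons_exact[of k S UNIV "card S" ds'] 2 by (simp only: S'_def Int_UNIV_right)
    show ?thesis by (simp only: exact stay)
  qed
qed

lemma chain_count_repeat_card:
  assumes "S \<subseteq> {1..k}"
  shows "chain_count UNIV k S (card S # card S # ds) = chain_count UNIV k S (card S # ds)"
proof (cases "card S < k")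
  case False
  then have "S = {1..k}"
    using assms card_mono[OF _ assms] by (intro card_subset_eq) auto
  then show ?thesis using chain_count_full_repeat[of k ds] by simp
qed (rule chain_count_gap_repeat[OF assms])

lemma chain_count_repeat_thrice:
  "chain_count UNIV k S (x # x # x # ds) = chain_count UNIV k S (x # x # ds)"
proof -
  have "chain_count UNIV (Suc k) T (x # x # ds) = chain_count UNIV (Suc k) T (x # ds)"
    if "T \<subseteq> admissible_rows k S" "card T = x" for T
    using chain_count_repeat_card[of T "Suc k" ds] that admissible_rows_subset by blast
  then show ?thesis by simp
qed

lemma chain_count_replicate_min2:
  "chain_count UNIV k S (replicate n x @ ds) = chain_count UNIV k S (replicate (min n 2) x @ ds)"
proof (induction n rule: less_induct)
  case (less n)
  show ?case
  proof (cases "n \<le> 2")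
    case False
    define n' where "n' = n - 3"
    have n: "n = Suc (Suc (Suc n'))" using False by (simp add: n'_def)
    then have "replicate n x = x # x # x # replicate n' x"
      "replicate (n - 1) x = x # x # replicate n' x"
      by simp_all
    then have "chain_count UNIV k S (replicate n x @ ds) =
        chain_count UNIV k S (replicate (n - 1) x @ ds)"
      using chain_count_repeat_thrice by simp
    also have "\<dots> = chain_count UNIV k S (replicate (min n 2) x @ ds)"
      using less[of "n - 1"] False by simp
    finally show ?thesis .
  qed simp
qed

definition plateaus :: "(nat \<Rightarrow> nat) \<Rightarrow> nat \<Rightarrow> nat list" where
  "plateaus s c = concat (map (\<lambda>j. replicate (s j) j) (rev [1..<c + 1]))"

lemma plateaus_0 [simp]: "plateaus s 0 = []"
  by (simp add: plateaus_def)

lemma plateaus_Suc [simp]: "plateaus s (Suc c) = replicate (s (Suc c)) (Suc c) @ plateaus s c"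
  by (simp add: plateaus_def)

lemma diagseq_eq_staircase_plateaus: "diagseq q s = [1..<q + 1] @ plateaus s q"
  by (simp add: diagseq_def plateaus_def)

lemma plateaus_Suc_eq_pair:
  assumes "2 \<le> s (Suc c)"
  shows "plateaus s (Suc c) = Suc c # Suc c # replicate (s (Suc c) - 2) (Suc c) @ plateaus s c"
proof -
  have "s (Suc c) = Suc (Suc (s (Suc c) - 2))" using assms by simp
  then show ?thesis by (metis append_Cons plateaus_Suc replicate_Suc)
qed

lemma length_plateaus: "length (plateaus s c) = (\<Sum>i=1..c. s i)"
  by (induction c) simp_all

lemma plateaus_eq_if_zero:
  assumes "k \<le> q" and "\<forall>j. k < j \<and> j \<le> q \<longrightarrow> s j = 0"
  shows "plateaus s q = plateaus s k"
  using assms by (induction rule: dec_induct) auto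

lemma set_plateaus_subset: "set (plateaus s c) \<subseteq> {1..c}"
  by (induction c) auto

lemma no_trailing_diagseq: "no_trailing ((=) 0) (diagseq q s)"
  using set_plateaus_subset[of s q]
  by (intro no_trailing_zero_if_positive) (auto simp: diagseq_eq_staircase_plateaus)

lemma chain_count_plateaus_min2:
  "chain_count UNIV k S (plateaus s c) = chain_count UNIV k S (plateaus (\<lambda>i. min (s i) 2) c)"
proof (induction c arbitrary: k S)
  case (Suc c)
  have "chain_count UNIV k S (plateaus s (Suc c)) =
      chain_count UNIV k S (replicate (min (s (Suc c)) 2) (Suc c) @ plateaus s c)"
    using chain_count_replicate_min2 by simp
  also have "\<dots> = chain_count UNIV k S
      (replicate (min (s (Suc c)) 2) (Suc c) @ plateaus (\<lambda>i. min (s i) 2) c)"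
    by (rule chain_count_append_cong) (rule Suc.IH)
  finally show ?case by simp
qed simp

section \<open>Initial and final blocks of rows\<close>

definition blocks :: "nat \<Rightarrow> nat \<Rightarrow> nat \<Rightarrow> nat set" where
  "blocks n c a = {1..a} \<union> {n + a + 1 - c..n}"

lemma blocks_subset: "a \<le> c \<Longrightarrow> c < n \<Longrightarrow> blocks n c a \<subseteq> {1..n}"
  unfolding blocks_def by auto

lemma card_blocks:
  assumes "a \<le> c" and "c < n"
  shows "card (blocks n c a) = c"
proof -
  have "card (blocks n c a) = card {1..a} + card {n + a + 1 - c..n}"
    unfolding blocks_def by (rule card_Un_disjoint) (use assms in auto)
  then show ?thesis using assms by simp
qed

lemma Suc_notin_blocks: "a \<le> c \<Longrightarrow> c < n \<Longrightarrow> Suc a \<notin> blocks n c a"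
  unfolding blocks_def by auto

lemma admissible_rows_blocks:
  "a \<le> c \<Longrightarrow> c < n \<Longrightarrow> admissible_rows n (blocks n c a) = blocks (Suc n) c a"
  unfolding admissible_rows_def blocks_def by (auto; arith)

lemma skip_blocks:
  assumes "a \<le> c" and "c < n"
  shows "skip (Suc a) ` blocks n c a = blocks (Suc n) c a"
  using assms unfolding set_eq_iff in_skip_image_iff blocks_def by auto

lemma inj_on_blocks:
  assumes "c < n"
  shows "inj_on (blocks n c) {..c}"
proof
  have in_blocks: "Suc b \<in> blocks n c b'" if "b < b'" for b b'
    using that by (auto simp: blocks_def)
  fix a a' assume "a \<in> {..c}" "a' \<in> {..c}" and eq: "blocks n c a = blocks n c a'"
  then show "a = a'"
    using in_blocks[of a a'] in_blocks[of a' a] Suc_notin_blocks[of a c n]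
      Suc_notin_blocks[of a' c n] assms
    by (cases a a' rule: linorder_cases) auto
qed

lemma interval_of_upward_closed:
  fixes U :: "nat set"
  assumes "finite U" and upper: "\<And>j. j \<in> U \<Longrightarrow> j \<le> n"
    and closed: "\<And>j. j \<in> U \<Longrightarrow> j < n \<Longrightarrow> Suc j \<in> U"
  shows "U = {Suc n - card U..n}"
proof (cases "U = {}")
  case False
  define p where "p = Min U"
  have p: "p \<in> U" "\<And>j. j \<in> U \<Longrightarrow> p \<le> j"
    using False assms(1) by (auto simp: p_def)
  have fill: "j \<in> U" if "p \<le> j" "j \<le> n" for j
    using that(1)
  proof (induction rule: dec_induct)
    case (step i)
    show ?case by (rule closed) (use step that(2) in auto)
  qed (rule p(1))
  have "U = {p..n}"
    using fill upper p(2) by (meson atLeastAtMost_iff set_eqI)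
  moreover have "p \<le> n" using upper p(1) by blast
  ultimately show ?thesis by simp
qed simp

text \<open>If \<open>card (admissible_rows n T) = card T\<close>, then every row of \<open>T\<close> after the first gap is
  followed by another row of \<open>T\<close>, by \<open>card_admissible_rows_less\<close>.\<close>
lemma blocks_of_card_admissible_rows:
  assumes T: "T \<subseteq> {1..n}" and "card T = c" and "c < n"
    and eq: "card (admissible_rows n T) = c"
  obtains a where "a \<le> c" and "T = blocks n c a"
proof -
  have "finite T" using T finite_subset by blast
  obtain m where m: "1 \<le> m" "m \<le> n" "m \<notin> T" and top: "{1..m - 1} \<subseteq> T"
    using obtain_first_gap[OF T] assms(2,3) by auto
  define a where "a = m - 1"
  define U where "U = T - {1..a}"
  have U_above: "m < j" if "j \<in> U" for j
  proof -
    have "j \<in> T" "\<not> j \<le> a" using that T by (auto simp: U_def)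
    moreover have "j \<noteq> m" using m(3) \<open>j \<in> T\<close> by auto
    ultimately show ?thesis using m(1) by (simp add: a_def)
  qed
  have U: "U = {Suc n - card U..n}"
  proof (rule interval_of_upward_closed)
    show "finite U" using \<open>finite T\<close> by (simp add: U_def)
    show "j \<le> n" if "j \<in> U" for j using that T by (auto simp: U_def)
    show "Suc j \<in> U" if "j \<in> U" "j < n" for j
    proof -
      have "Suc j \<in> T"
        using card_admissible_rows_less[OF \<open>finite T\<close> m(3,1), of j n] that U_above[OF that(1)] eq assms(2)
        by (auto simp: U_def)
      then show ?thesis using U_above[OF that(1)] by (auto simp: U_def a_def)
    qed
  qed
  have "card T = a + card U"
    using card_Diff_subset[OF _ top] card_mono[OF \<open>finite T\<close> top] by (simp add: U_def a_def)
  then have "a \<le> c" "Suc n - card U = n + a + 1 - c"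
    using assms(2,3) by auto
  moreover have "T = {1..a} \<union> U" using top by (auto simp: U_def a_def)
  ultimately have "T = blocks n c a" "a \<le> c"
    using U unfolding blocks_def by simp_all
  then show ?thesis using that by blast
qed

lemma chain_count_Cons_card_less:
  assumes "T \<subseteq> {1..n}" and "card T = c" and "c < n"
  shows "chain_count UNIV n T (c # Y) =
    (if T \<in> blocks n c ` {..c} then chain_count UNIV n T Y else 0)"
proof -
  obtain m where m: "1 \<le> m" "m \<le> n" "m \<notin> T"
    using obtain_gap[OF assms(1)] assms(2,3) by auto
  have "finite T" using assms(1) finite_subset by blast
  show ?thesis
  proof (cases "T \<in> blocks n c ` {..c}")
    case True
    then obtain a where "a \<le> c" "T = blocks n c a" by auto
    then have "card (admissible_rows n T) = card T"
      using admissible_rows_blocks card_blocks assms(2,3) by simp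
    then show ?thesis
      using chain_count_Cons_stay[OF assms(1)] True assms(2,3) by simp
  next
    case False
    then have "card (admissible_rows n T) \<noteq> c"
      using blocks_of_card_admissible_rows[OF assms] by (metis atMost_iff image_eqI)
    then have "card (admissible_rows n T) < c"
      using card_admissible_rows_le[OF \<open>finite T\<close> m(3,1,2)] assms(2) by simp
    then show ?thesis
      using chain_count_Cons_eq_0[of n T UNIV c Y] False by simp
  qed
qed

lemma chain_count_full_pair:
  assumes "c \<le> k"
  shows "chain_count UNIV k {1..k} (c # c # Y) = (\<Sum>a\<le>c. chain_count UNIV (Suc k) (blocks (Suc k) c a) Y)"
proof -
  let ?subsets = "{T. T \<subseteq> {1..Suc k} \<and> card T = c}"
  let ?B = "blocks (Suc k) c ` {..c}"
  have B: "?B \<subseteq> ?subsets"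
  proof
    fix T assume "T \<in> ?B"
    then obtain a where "a \<le> c" "T = blocks (Suc k) c a" by auto
    then show "T \<in> ?subsets"
      using blocks_subset[of a c "Suc k"] card_blocks[of a c "Suc k"] assms by simp
  qed
  have "chain_count UNIV k {1..k} (c # c # Y) = (\<Sum>T \<in> ?subsets. chain_count UNIV (Suc k) T (c # Y))"
    unfolding chain_count.simps(2)[of UNIV k "{1..k}"] admissible_rows_atLeastAtMost by simp
  also have "\<dots> = (\<Sum>T \<in> ?subsets. if T \<in> ?B then chain_count UNIV (Suc k) T Y else 0)"
    using assms by (intro sum.cong refl chain_count_Cons_card_less) auto
  also have "\<dots> = (\<Sum>T \<in> ?B. chain_count UNIV (Suc k) T Y)"
    using B by (simp add: sum.If_cases Int_absorb1)
  also have "\<dots> = (\<Sum>a\<le>c. chain_count UNIV (Suc k) (blocks (Suc k) c a) Y)"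
    using assms by (simp add: sum.reindex inj_on_blocks)
  finally show ?thesis .
qed

lemma chain_count_blocks_shift:
  assumes "a \<le> c" and "c < n"
  shows "chain_count UNIV (n + t) (blocks (n + t) c a) Y = chain_count UNIV n (blocks n c a) Y"
proof (induction t)
  case (Suc t)
  have "c < n + t" using assms by simp
  then have "chain_count UNIV (Suc (n + t)) (blocks (Suc (n + t)) c a) Y =
      chain_count UNIV (n + t) (blocks (n + t) c a) Y"
    using chain_count_skip[OF Suc_notin_blocks[OF assms(1)], of "n + t"] skip_blocks[OF assms(1)] assms(1)
    by simp
  then show ?case using Suc.IH by simp
qed simp

lemma chain_count_pair_below_full:
  assumes "c < q"
  shows "chain_count UNIV q {1..q} (c # c # Y) = chain_count UNIV c {1..c} (c # c # Y)"
proof -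
  have "chain_count UNIV (Suc q) (blocks (Suc q) c a) Y = chain_count UNIV (Suc c) (blocks (Suc c) c a) Y"
    if "a \<le> c" for a
    using chain_count_blocks_shift[OF that, of "Suc c" "q - c" Y] assms by simp
  then show ?thesis
    using chain_count_full_pair[of c q Y] chain_count_full_pair[of c c Y] assms by simp
qed

lemma blocks_subset_blocks_iff:
  assumes "a \<le> Suc c" and "a' \<le> c" and "Suc c < n"
  shows "blocks n c a' \<subseteq> blocks n (Suc c) a \<longleftrightarrow> a' = a \<or> Suc a' = a"
proof
  assume sub: "blocks n c a' \<subseteq> blocks n (Suc c) a"
  show "a' = a \<or> Suc a' = a"
  proof (rule ccontr)
    assume "\<not> (a' = a \<or> Suc a' = a)"
    then consider "a < a'" | "Suc a' < a" by linarith
    then show False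
    proof cases
      case 1
      then have "Suc a \<in> blocks n c a'" by (auto simp: blocks_def)
      then show False using sub Suc_notin_blocks[OF assms(1,3)] by auto
    next
      case 2
      then have "n + a - Suc c \<in> blocks n c a'" "n + a - Suc c \<notin> blocks n (Suc c) a"
        using assms by (auto simp: blocks_def)
      then show False using sub by auto
    qed
  qed
qed (use assms in \<open>auto simp: blocks_def\<close>)

lemma sum_choose_pair:
  assumes "a \<le> Suc c"
  shows "(\<Sum>a' | a' \<le> c \<and> (a' = a \<or> Suc a' = a). c choose a') = Suc c choose a"
proof (cases a)
  case 0
  then have "{a'. a' \<le> c \<and> (a' = a \<or> Suc a' = a)} = {0}" by auto
  then show ?thesis using 0 by simp
next
  case (Suc b)
  show ?thesis
  proof (cases "b < c")
    case True
    then have "{a'. a' \<le> c \<and> (a' = a \<or> Suc a' = a)} = {b, Suc b}" using Suc by auto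
    then show ?thesis using Suc by simp
  next
    case False
    then have "b = c" using assms Suc by simp
    then have "{a'. a' \<le> c \<and> (a' = a \<or> Suc a' = a)} = {c}" using Suc by auto
    then show ?thesis using Suc \<open>b = c\<close> by simp
  qed
qed

lemma chain_count_blocks_pair:
  assumes "a \<le> Suc c" and "Suc c < n"
  shows "chain_count UNIV n (blocks n (Suc c) a) (c # c # W) =
    (\<Sum>a' | a' \<le> c \<and> (a' = a \<or> Suc a' = a). chain_count UNIV (Suc n) (blocks (Suc n) c a') W)"
proof -
  let ?A = "{a'. a' \<le> c \<and> (a' = a \<or> Suc a' = a)}"
  let ?subsets = "{T. T \<subseteq> blocks (Suc n) (Suc c) a \<and> card T = c}"
  let ?B = "blocks (Suc n) c ` {..c}"
  have lt: "c < Suc n" using assms(2) by simp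
  have sub: "blocks (Suc n) (Suc c) a \<subseteq> {1..Suc n}"
    using blocks_subset assms by simp
  have fin: "finite ?subsets" by (simp add: blocks_def)
  have sets: "{T \<in> ?subsets. T \<in> ?B} = blocks (Suc n) c ` ?A"
  proof
    show "{T \<in> ?subsets. T \<in> ?B} \<subseteq> blocks (Suc n) c ` ?A"
      using blocks_subset_blocks_iff[of a c _ "Suc n"] assms by auto
    show "blocks (Suc n) c ` ?A \<subseteq> {T \<in> ?subsets. T \<in> ?B}"
      using blocks_subset_blocks_iff[of a c _ "Suc n"] card_blocks[of _ c "Suc n"] assms by auto
  qed
  have "chain_count UNIV n (blocks n (Suc c) a) (c # c # W) =
      (\<Sum>T \<in> ?subsets. chain_count UNIV (Suc n) T (c # W))"
    unfolding chain_count.simps(2)[of UNIV n] admissible_rows_blocks[OF assms] by simp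
  also have "\<dots> = (\<Sum>T \<in> ?subsets. if T \<in> ?B then chain_count UNIV (Suc n) T W else 0)"
    using sub lt by (intro sum.cong refl chain_count_Cons_card_less) auto
  also have "\<dots> = (\<Sum>T \<in> {T \<in> ?subsets. T \<in> ?B}. chain_count UNIV (Suc n) T W)"
    by (rule sum.inter_filter[symmetric, OF fin])
  also have "\<dots> = (\<Sum>a' \<in> ?A. chain_count UNIV (Suc n) (blocks (Suc n) c a') W)"
    unfolding sets using inj_on_subset[OF inj_on_blocks[OF lt]] by (simp add: sum.reindex subset_eq)
  finally show ?thesis .
qed

lemma chain_count_blocks_replicate:
  assumes "a \<le> c" and "c < n"
  shows "chain_count UNIV n (blocks n c a) (replicate r c @ Y) = chain_count UNIV n (blocks n c a) Y"
proof -
  have "card (admissible_rows n (blocks n c a)) = card (blocks n c a)"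
    using assms by (simp add: admissible_rows_blocks card_blocks)
  then show ?thesis
    using chain_count_replicate_stay[OF blocks_subset[OF assms]] assms by (simp add: card_blocks)
qed

lemma chain_count_blocks_plateaus:
  assumes "\<forall>j. 1 \<le> j \<and> j \<le> c \<longrightarrow> 2 \<le> s j" and "a \<le> Suc c" and "Suc c < n"
  shows "chain_count UNIV n (blocks n (Suc c) a) (plateaus s c) = Suc c choose a"
  using assms
proof (induction c arbitrary: a n)
  case 0
  then show ?case by (cases a) auto
next
  case (Suc c)
  let ?W = "replicate (s (Suc c) - 2) (Suc c) @ plateaus s c"
  have two: "2 \<le> s (Suc c)" using Suc.prems(1) by simp
  have "chain_count UNIV n (blocks n (Suc (Suc c)) a) (plateaus s (Suc c)) =
      (\<Sum>a' | a' \<le> Suc c \<and> (a' = a \<or> Suc a' = a).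
         chain_count UNIV (Suc n) (blocks (Suc n) (Suc c) a') ?W)"
    unfolding plateaus_Suc_eq_pair[of s c, OF two] by (rule chain_count_blocks_pair) (use Suc.prems in auto)
  also have "\<dots> = (\<Sum>a' | a' \<le> Suc c \<and> (a' = a \<or> Suc a' = a). Suc c choose a')"
    using Suc.IH Suc.prems by (intro sum.cong refl) (simp add: chain_count_blocks_replicate)
  also have "\<dots> = Suc (Suc c) choose a"
    by (rule sum_choose_pair[OF Suc.prems(2)])
  finally show ?case .
qed

lemma chain_count_plateaus_eq_power:
  assumes "\<forall>j. 1 \<le> j \<and> j < q \<longrightarrow> 2 \<le> s j" and "1 \<le> s q" and "1 \<le> q"
  shows "chain_count UNIV q {1..q} (plateaus s q) = 2 ^ q"
proof -
  obtain p where q: "q = Suc p" using assms(3) by (cases q) auto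
  let ?V = "plateaus s p"
  have "chain_count UNIV q {1..q} (plateaus s q) =
      chain_count UNIV q {1..q} (replicate (min (s q) 2) q @ ?V)"
    using chain_count_replicate_min2 q by simp
  also have "\<dots> = chain_count UNIV q {1..q} (q # q # ?V)"
  proof (cases "s q = 1")
    case True
    then show ?thesis
      using chain_count_repeat_card[of "{1..q}" q ?V] by simp
  next
    case False
    then have "min (s q) 2 = Suc (Suc 0)" using assms(2) by simp
    then show ?thesis by simp
  qed
  also have "\<dots> = (\<Sum>a\<le>q. chain_count UNIV (Suc q) (blocks (Suc q) q a) ?V)"
    by (rule chain_count_full_pair) simp
  also have "\<dots> = (\<Sum>a\<le>q. q choose a)"
    using chain_count_blocks_plateaus[of p s] assms(1) q by simp
  also have "\<dots> = 2 ^ q"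
    by (rule choose_row_sum)
  finally show ?thesis .
qed

section \<open>Partitions with exactly \<open>q\<close> parts\<close>

lemma admissible_rows_atLeastAtMost_Int_atMost:
  "a \<le> q \<Longrightarrow> q \<le> k \<Longrightarrow> admissible_rows k {1..a} \<inter> {..q} = {1..a}"
  unfolding admissible_rows_def by auto

lemma chain_count_atMost_replicate:
  assumes "a \<le> q" and "q \<le> k"
  shows "chain_count {..q} k {1..a} (replicate r a @ ds) = chain_count {..q} (k + r) {1..a} ds"
  using assms
proof (induction r arbitrary: k)
  case (Suc r)
  have "chain_count {..q} k {1..a} (a # replicate r a @ ds) =
      chain_count {..q} (Suc k) {1..a} (replicate r a @ ds)"
    by (rule chain_count_Cons_exact[of k "{1..a}" "{..q}" a,
          unfolded admissible_rows_atLeastAtMost_Int_atMost[OF Suc.prems]]) simp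
  then show ?case using Suc.IH[of "Suc k"] Suc.prems by simp
qed simp

lemma card_admissible_rows_less_of_card_pred:
  assumes "T \<subseteq> {1..a}" and "card T = a - 1" and "T \<noteq> {1..a - 1}" and "1 \<le> a" and "Suc a \<le> k"
  shows "card (admissible_rows k T) < a - 1"
proof -
  obtain m where m: "1 \<le> m" "m \<le> a" "m \<notin> T"
    using obtain_gap[OF assms(1)] assms(2,4) by auto
  have "T = {1..a} - {m}"
    using assms(1,2) m by (intro card_subset_eq) auto
  moreover have "{1..a} - {a} = {1..a - 1}" by auto
  ultimately have "m \<noteq> a" using assms(3) by auto
  then have "a \<in> T" "m < a" using \<open>T = {1..a} - {m}\<close> m assms(4) by auto
  then have "card (admissible_rows k T) < card T"
    using assms(1,5) m finite_subset[OF assms(1)]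
    by (intro card_admissible_rows_less[of T m a]) auto
  then show ?thesis using assms(2) by simp
qed

lemma chain_count_atMost_pair:
  assumes "1 \<le> a" and "a \<le> q" and "q \<le> k"
  shows "chain_count {..q} k {1..a} ((a - 1) # (a - 1) # ds) =
    chain_count {..q} (Suc (Suc k)) {1..a - 1} ds"
proof -
  let ?subsets = "{T. T \<subseteq> {1..a} \<and> card T = a - 1}"
  have fin: "finite ?subsets" by simp
  have top: "{1..a - 1} \<in> ?subsets" by auto
  have zero: "chain_count {..q} (Suc k) T ((a - 1) # ds) = 0" if "T \<in> ?subsets - {{1..a - 1}}" for T
  proof (rule chain_count_Cons_eq_0)
    have "card (admissible_rows (Suc k) T) < a - 1"
      using that assms by (intro card_admissible_rows_less_of_card_pred) auto
    then show "card (admissible_rows (Suc k) T \<inter> {..q}) < a - 1"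
      using card_mono[of "admissible_rows (Suc k) T" "admissible_rows (Suc k) T \<inter> {..q}"] by simp
  qed
  have "chain_count {..q} k {1..a} ((a - 1) # (a - 1) # ds) =
      (\<Sum>T \<in> ?subsets. chain_count {..q} (Suc k) T ((a - 1) # ds))"
    unfolding chain_count.simps(2)[of "{..q}" k] admissible_rows_atLeastAtMost_Int_atMost[OF assms(2,3)] ..
  also have "\<dots> = chain_count {..q} (Suc k) {1..a - 1} ((a - 1) # ds) +
      (\<Sum>T \<in> ?subsets - {{1..a - 1}}. chain_count {..q} (Suc k) T ((a - 1) # ds))"
    by (rule sum.remove[OF fin top])
  also have "\<dots> = chain_count {..q} (Suc k) {1..a - 1} ((a - 1) # ds)"
  proof -
    have "(\<Sum>T \<in> ?subsets - {{1..a - 1}}. chain_count {..q} (Suc k) T ((a - 1) # ds)) = 0"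
      using zero by (rule sum.neutral[OF ballI])
    then show ?thesis by (simp only: add_0_right)
  qed
  also have "\<dots> = chain_count {..q} (Suc (Suc k)) {1..a - 1} ds"
  proof -
    have "a - 1 \<le> q" "q \<le> Suc k" using assms by auto
    show ?thesis
      by (rule chain_count_Cons_exact[of "Suc k" "{1..a - 1}" "{..q}" "a - 1",
            unfolded admissible_rows_atLeastAtMost_Int_atMost[OF \<open>a - 1 \<le> q\<close> \<open>q \<le> Suc k\<close>]]) simp
  qed
  finally show ?thesis .
qed

lemma chain_count_atMost_plateaus:
  assumes "\<forall>j. 1 \<le> j \<and> j \<le> c \<longrightarrow> 2 \<le> s j" and "Suc c \<le> q" and "q \<le> k"
  shows "chain_count {..q} k {1..Suc c} (plateaus s c) = 1"
  using assms
proof (induction c arbitrary: k)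
  case (Suc c)
  let ?W = "replicate (s (Suc c) - 2) (Suc c) @ plateaus s c"
  have two: "2 \<le> s (Suc c)" using Suc.prems(1) by simp
  have "chain_count {..q} k {1..Suc (Suc c)} (plateaus s (Suc c)) =
      chain_count {..q} (Suc (Suc k)) {1..Suc c} ?W"
    using chain_count_atMost_pair[of "Suc (Suc c)" q k] Suc.prems(2,3)
    unfolding plateaus_Suc_eq_pair[of s c, OF two] by simp
  also have "\<dots> = chain_count {..q} (Suc (Suc k) + (s (Suc c) - 2)) {1..Suc c} (plateaus s c)"
    using Suc.prems(2,3) by (intro chain_count_atMost_replicate) auto
  also have "\<dots> = 1"
    using Suc.IH Suc.prems by simp
  finally show ?case .
qed simp

lemma chain_count_atMost_plateaus_eq_1:
  assumes "\<forall>j. 1 \<le> j \<and> j < q \<longrightarrow> 2 \<le> s j" and "1 \<le> q"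
  shows "chain_count {..q} q {1..q} (plateaus s q) = 1"
proof -
  obtain p where q: "q = Suc p" using assms(2) by (cases q) auto
  have "chain_count {..q} q {1..q} (plateaus s q) = chain_count {..q} (q + s q) {1..q} (plateaus s p)"
    using chain_count_atMost_replicate[of q q q "s q" "plateaus s p"] q by simp
  also have "\<dots> = 1"
    using chain_count_atMost_plateaus[of p s q "q + s q"] assms(1) q by simp
  finally show ?thesis .
qed

lemma nth_default_diagseq: "1 \<le> q \<Longrightarrow> nth_default 0 (diagseq q s) (q - 1) = q"
  by (simp add: diagseq_eq_staircase_plateaus nth_default_def nth_append)

lemma dclass_k_diagseq:
  assumes "1 \<le> q"
  shows "dclass_k (diagseq q s) q = dclass_on {..q} (diagseq q s)"
proof -
  have "length \<alpha> = q \<longleftrightarrow> (\<forall>i. 0 < part \<alpha> i \<longrightarrow> i \<in> {..q})" if "\<alpha> \<in> dclass (diagseq q s)" for \<alpha>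
  proof -
    have pos: "\<forall>x\<in>set \<alpha>. 0 < x" using that by (simp add: dclass_def is_partition_def)
    have "card (diag_rows \<alpha> q) = q"
      using card_diag_rows_of_dclass[OF no_trailing_diagseq that, of "q - 1"]
        nth_default_diagseq[OF assms] assms by simp
    then have "diag_rows \<alpha> q = {1..q}"
      using diag_rows_subset by (intro card_subset_eq) auto
    then have "q \<in> diag_rows \<alpha> q" using assms by simp
    then have "0 < part \<alpha> q" by (simp add: in_diag_rows_self_iff)
    then have "q \<le> length \<alpha>" using part_pos_iff[OF pos] by simp
    show ?thesis
    proof
      assume "\<forall>i. 0 < part \<alpha> i \<longrightarrow> i \<in> {..q}"
      then have "length \<alpha> \<le> q"
        using part_pos_iff[OF pos, of "length \<alpha>"] \<open>q \<le> length \<alpha>\<close> assms by auto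
      then show "length \<alpha> = q" using \<open>q \<le> length \<alpha>\<close> by simp
    qed (use part_pos_iff[OF pos] in auto)
  qed
  then show ?thesis by (auto simp: dclass_k_def dclass_on_def)
qed

section \<open>The product formula\<close>

lemma prod_unit_drops_eq_power:
  fixes f :: "nat \<Rightarrow> nat"
  assumes "\<And>i. q \<le> i \<Longrightarrow> i < q + n \<Longrightarrow> f (Suc i) \<le> f i \<and> f i \<le> Suc (f (Suc i))"
  shows "(\<Prod>i = q..<q + n. f i - f (Suc i) + 1) = 2 ^ (f q - f (q + n))"
  using assms
proof (induction n)
  case (Suc n)
  have step: "f (Suc (q + n)) \<le> f (q + n)" "f (q + n) \<le> Suc (f (Suc (q + n)))"
    using Suc.prems[of "q + n"] by auto
  have "f (q + n) \<le> f q"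
    by (rule lift_Suc_antimono_le_ivl[of "{q..<q + n}"]) (use Suc.prems in auto)
  moreover have unit: "x + 1 = 2 ^ x" if "x \<le> 1" for x :: nat
    using that by (cases x) auto
  have "f (q + n) - f (Suc (q + n)) + 1 = 2 ^ (f (q + n) - f (Suc (q + n)))"
    by (rule unit) (use step in linarith)
  ultimately show ?case
    using Suc step by (simp add: power_add[symmetric])
qed simp

lemma successively_unit_steps_plateaus:
  assumes "\<forall>j. 1 \<le> j \<and> j < c \<longrightarrow> 1 \<le> s j"
  shows "successively (\<lambda>x y. y \<le> x \<and> x \<le> Suc y) (c # plateaus s c @ [0])"
  using assms
proof (induction c)
  case (Suc c)
  let ?P = "\<lambda>x y. y \<le> x \<and> x \<le> Suc y"
  have "successively ?P (replicate n (Suc c))" for n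
    by (induction n) (auto simp: successively_Cons)
  moreover have "successively ?P (plateaus s c @ [0])"
    using Suc by (simp add: successively_Cons)
  moreover have "hd (plateaus s c @ [0]) = c"
    using Suc.prems by (cases c) (auto simp: hd_append)
  moreover have "Suc c # plateaus s (Suc c) @ [0] =
      replicate (Suc (s (Suc c))) (Suc c) @ (plateaus s c @ [0])"
    by simp
  ultimately show ?case
    by (simp only: successively_append_iff) simp
qed simp

lemma ent_diagseq_tail:
  assumes "1 \<le> q" and "q \<le> i" and "i \<le> Suc (length (diagseq q s))"
  shows "ent (diagseq q s) i = (q # plateaus s q @ [0]) ! (i - q)"
proof -
  have d: "diagseq q s @ [0] = [1..<q] @ (q # plateaus s q @ [0])"
    using assms(1) by (simp add: diagseq_eq_staircase_plateaus)
  have ent_eq: "ent (diagseq q s) i = (diagseq q s @ [0]) ! (i - 1)"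
  proof (cases "i \<le> length (diagseq q s)")
    case True
    moreover have "i - 1 < length (diagseq q s)" using True assms(1,2) by linarith
    ultimately show ?thesis using assms(1,2) by (simp add: ent_def nth_append)
  next
    case False
    then have "i = Suc (length (diagseq q s))" using assms(3) by simp
    then show ?thesis by (simp add: ent_def)
  qed
  have idx: "i - 1 = length [1..<q] + (i - q)"
    using assms(1,2) by simp
  show ?thesis
    unfolding ent_eq d idx by (rule nth_append_length_plus)
qed

lemma prod_diagseq_drops_eq_power:
  assumes "\<forall>j. 1 \<le> j \<and> j < q \<longrightarrow> 1 \<le> s j" and "1 \<le> q"
    and "L = q + (\<Sum>i=1..q. s i)"
  shows "(\<Prod>i = q..L. (if i < L then ent (diagseq q s) i - ent (diagseq q s) (i + 1)
      else ent (diagseq q s) L) + 1) = 2 ^ q"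
proof -
  let ?d = "diagseq q s"
  have L: "length ?d = L"
    using assms(2,3) by (simp add: diagseq_eq_staircase_plateaus length_plateaus)
  have ent_q: "ent ?d q = q"
    using ent_diagseq_tail[of q q s] assms(2) L assms(3) by simp
  have "ent ?d (Suc L) = 0"
    using L by (simp add: ent_def)
  have term_eq: "(if i < L then ent ?d i - ent ?d (i + 1) else ent ?d L) + 1 =
      ent ?d i - ent ?d (Suc i) + 1" if "i \<in> {q..<q + (Suc L - q)}" for i
  proof -
    have "i \<le> L" using that assms(3) by auto
    then show ?thesis using \<open>ent ?d (Suc L) = 0\<close> by (cases "i = L") auto
  qed
  have "{q..L} = {q..<q + (Suc L - q)}" using assms(3) by auto
  then have "(\<Prod>i = q..L. (if i < L then ent ?d i - ent ?d (i + 1) else ent ?d L) + 1) =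
      (\<Prod>i = q..<q + (Suc L - q). ent ?d i - ent ?d (Suc i) + 1)"
    by (simp only:) (rule prod.cong[OF refl term_eq])
  also have "\<dots> = 2 ^ (ent ?d q - ent ?d (q + (Suc L - q)))"
  proof (rule prod_unit_drops_eq_power)
    fix i assume "q \<le> i" "i < q + (Suc L - q)"
    then have i: "q \<le> i" "i < Suc L" by auto
    let ?u = "q # plateaus s q @ [0]"
    have "Suc (i - q) < length ?u"
      using i L assms(3) by (simp add: diagseq_eq_staircase_plateaus length_plateaus)
    then have "?u ! Suc (i - q) \<le> ?u ! (i - q) \<and> ?u ! (i - q) \<le> Suc (?u ! Suc (i - q))"
      by (rule successively_nth[OF successively_unit_steps_plateaus[OF assms(1)]])
    moreover have "ent ?d i = ?u ! (i - q)" "ent ?d (Suc i) = ?u ! Suc (i - q)"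
      using ent_diagseq_tail[of q i s] ent_diagseq_tail[of q "Suc i" s] i L assms(2)
      by (simp_all add: Suc_diff_le)
    ultimately show "ent ?d (Suc i) \<le> ent ?d i \<and> ent ?d i \<le> Suc (ent ?d (Suc i))"
      by simp
  qed
  also have "\<dots> = 2 ^ q" using ent_q \<open>ent ?d (Suc L) = 0\<close> assms(3) by simp
  finally show ?thesis .
qed

lemma card_dclass_diagseq: "card (dclass (diagseq q s)) = chain_count UNIV q {1..q} (plateaus s q)"
proof -
  have "card (dclass (diagseq q s)) = chain_count UNIV 0 {} (diagseq q s)"
    using card_dclass_on_eq_chain_count[OF no_trailing_diagseq, of UNIV] by simp
  also have "\<dots> = chain_count UNIV q {1..q} (plateaus s q)"
    unfolding diagseq_eq_staircase_plateaus by (rule chain_count_staircase) simp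
  finally show ?thesis .
qed

lemma card_dclass_k_diagseq:
  assumes "1 \<le> q" and "\<forall>i. 1 \<le> i \<and> i < q \<longrightarrow> 2 \<le> s i"
  shows "card (dclass_k (diagseq q s) q) = 1"
proof -
  have "card (dclass_k (diagseq q s) q) = chain_count {..q} 0 {} (diagseq q s)"
    unfolding dclass_k_diagseq[OF assms(1)] by (rule card_dclass_on_eq_chain_count[OF no_trailing_diagseq])
  also have "\<dots> = chain_count {..q} q {1..q} (plateaus s q)"
    unfolding diagseq_eq_staircase_plateaus by (rule chain_count_staircase) auto
  also have "\<dots> = 1"
    using chain_count_atMost_plateaus_eq_1 assms by blast
  finally show ?thesis .
qed

lemma card_dclass_diagseq_eq_power:
  assumes "1 \<le> q" and "\<forall>i. 1 \<le> i \<and> i < q \<longrightarrow> 2 \<le> s i" and "1 \<le> s q"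
  shows "card (dclass (diagseq q s)) = 2 ^ q"
  using chain_count_plateaus_eq_power assms by (simp add: card_dclass_diagseq)

lemma card_dclass_staircase_one:
  assumes "1 \<le> m"
  shows "card (dclass ([1..<m] @ [1])) = m"
proof -
  have "no_trailing ((=) 0) ([1..<m] @ [1])" by (simp add: no_trailing_unfold)
  then have "card (dclass ([1..<m] @ [1])) = chain_count UNIV 0 {} ([1..<m - 1 + 1] @ [1])"
    using card_dclass_on_eq_chain_count[of "[1..<m] @ [1]" UNIV] assms by simp
  also have "\<dots> = chain_count UNIV (m - 1) {1..m - 1} [1]"
    by (rule chain_count_staircase) simp
  also have "\<dots> = card {T. T \<subseteq> {1..m} \<and> card T = 1}"
    using assms unfolding chain_count.simps admissible_rows_atLeastAtMost by simp
  also have "\<dots> = m"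
    by (simp add: n_subsets)
  finally show ?thesis .
qed

lemma exists_partition_card_dclass:
  assumes "1 \<le> m"
  shows "\<exists>n'>0. \<exists>\<alpha>. \<alpha> \<in> partitions n' \<and> card (dclass (delta \<alpha>)) = m"
proof -
  let ?d = "[1..<m] @ [1]"
  have "dclass ?d \<noteq> {}"
    using card_dclass_staircase_one[OF assms] assms by auto
  then obtain \<alpha> where \<alpha>: "is_partition \<alpha> (sum_list \<alpha>)" "delta \<alpha> = ?d"
    by (auto simp: dclass_def)
  then have "\<alpha> \<noteq> []" by (auto simp: delta_def)
  then have "0 < sum_list \<alpha>"
    using \<alpha>(1) by (cases \<alpha>) (auto simp: is_partition_def)
  moreover have "\<alpha> \<in> partitions (sum_list \<alpha>)"
    using \<alpha>(1) by (simp add: partitions_def)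
  moreover have "card (dclass (delta \<alpha>)) = m"
    using \<alpha>(2) card_dclass_staircase_one[OF assms] by simp
  ultimately show ?thesis by blast
qed

lemma card_dclass_diagseq_truncate:
  assumes "1 \<le> k" and "k < q" and "2 \<le> s k" and "\<forall>j. k < j \<and> j \<le> q \<longrightarrow> s j = 0"
  shows "card (dclass (diagseq q s)) = card (dclass (diagseq k s))"
proof -
  obtain p where k: "k = Suc p" using assms(1) by (cases k) auto
  then have "plateaus s k = k # k # replicate (s k - 2) k @ plateaus s p"
    using plateaus_Suc_eq_pair[of s p] assms(3) by simp
  moreover have "plateaus s q = plateaus s k"
    using plateaus_eq_if_zero assms(2,4) by simp
  ultimately show ?thesis
    using chain_count_pair_below_full[OF assms(2)] by (simp add: card_dclass_diagseq)
qed

lemma card_dclass_diagseq_min2: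
  "card (dclass (diagseq q s)) = card (dclass (diagseq q (\<lambda>i. min (s i) 2)))"
  using chain_count_plateaus_min2 by (simp add: card_dclass_diagseq)

theorem corollary4p7:
  fixes n q :: nat and s :: "nat \<Rightarrow> nat" and d :: "nat list"
  assumes "0 < n" and "d \<in> Delta n" and "1 \<le> q" and "d = diagseq q s"
  defines "L \<equiv> q + (\<Sum>i=1..q. s i)"
  defines "b \<equiv> (\<lambda>i. if i < L then ent d i - ent d (i + 1) else ent d L)"
  shows
    "((\<forall>i. 1 \<le> i \<and> i < q \<longrightarrow> 2 \<le> s i) \<longrightarrow> card (dclass_k d q) = 1)
   \<and> ((\<forall>i. 1 \<le> i \<and> i < q \<longrightarrow> 2 \<le> s i) \<and> 1 \<le> s q \<longrightarrow>
        card (dclass d) = (\<Prod>i=q..L. b i + 1))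
   \<and> (\<forall>m::nat. 1 \<le> m \<longrightarrow> (\<exists>n'::nat. 0 < n' \<and> (\<exists>\<alpha>. \<alpha> \<in> partitions n' \<and>
        card (dclass (delta \<alpha>)) = m)))
   \<and> (\<forall>k. 1 \<le> k \<and> k < q \<and> 2 \<le> s k \<and> (\<forall>j. k < j \<and> j \<le> q \<longrightarrow> s j = 0) \<longrightarrow>
        card (dclass d) = card (dclass (diagseq k s)))
   \<and> (card (dclass d) = card (dclass (diagseq q (\<lambda>i. min (s i) 2))))"
proof (intro conjI impI allI)
  show "card (dclass_k d q) = 1" if "\<forall>i. 1 \<le> i \<and> i < q \<longrightarrow> 2 \<le> s i"
    using card_dclass_k_diagseq assms(3,4) that by simp
  show "card (dclass d) = (\<Prod>i=q..L. b i + 1)"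
    if "(\<forall>i. 1 \<le> i \<and> i < q \<longrightarrow> 2 \<le> s i) \<and> 1 \<le> s q"
  proof -
    have "\<forall>i. 1 \<le> i \<and> i < q \<longrightarrow> 1 \<le> s i" using that by force
    then have "(\<Prod>i=q..L. b i + 1) = 2 ^ q"
      unfolding b_def assms(4)
      by (rule prod_diagseq_drops_eq_power[OF _ assms(3) L_def[THEN meta_eq_to_obj_eq]])
    moreover have "card (dclass d) = 2 ^ q"
      using card_dclass_diagseq_eq_power assms(3,4) that by simp
    ultimately show ?thesis by simp
  qed
  show "\<exists>n'>0. \<exists>\<alpha>. \<alpha> \<in> partitions n' \<and> card (dclass (delta \<alpha>)) = m" if "1 \<le> m" for m
    using exists_partition_card_dclass[OF that] .
  show "card (dclass d) = card (dclass (diagseq k s))"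
    if "1 \<le> k \<and> k < q \<and> 2 \<le> s k \<and> (\<forall>j. k < j \<and> j \<le> q \<longrightarrow> s j = 0)" for k
    using card_dclass_diagseq_truncate that assms(4) by blast
  show "card (dclass d) = card (dclass (diagseq q (\<lambda>i. min (s i) 2)))"
    using card_dclass_diagseq_min2 assms(4) by simp
qed

end
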